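(* For every real $x\geq 13$, $(x-1)\sqrt{1-\dfrac{2\ln x+4}{x}}-x+\ln x+4\geq 0$.
   Context: $\ln$ denotes the natural logarithm. *)

theory Defs
  imports Complex_Main
begin

end

theory Submission
  imports Defs
begin

text \<open>With \<open>L = ln x\<close>, since \<open>x - L - 4 \<le> \<bar>x - L - 4\<bar>\<close> it suffices to compare squares,
  \<open>x (x - L - 4)\<^sup>2 \<le> (x - 1)\<^sup>2 (x - 2L - 4)\<close>, which expands to the polynomial inequality
  \<open>(L\<^sup>2 + 4L + 7) x + 2L + 4 \<le> 2x\<^sup>2\<close>. Writing \<open>x = 13 s\<^sup>2\<close> with \<open>s \<ge> 1\<close>, the bounds
  \<open>ln 13 \<le> 2.7\<close> and \<open>ln s \<le> s - 1\<close> give \<open>L \<le> 0.7 + 2s\<close>, after which every term is at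
  most a constant multiple of \<open>s\<^sup>4\<close> and the coefficients add up to less than 338.\<close>

lemma ln_13_le: "ln (13::real) \<le> 27/10"
proof -
  have "(13::real) \<le> (1 + 27/50 + (27/50)\<^sup>2/2) ^ 5"
    by (simp add: eval_nat_numeral)
  also have "\<dots> \<le> exp (27/50) ^ 5"
    using exp_lower_Taylor_quadratic[of "27/50::real"] by (intro power_mono) auto
  also have "\<dots> = exp (27/10)"
    by (simp add: exp_of_nat_mult[symmetric])
  finally show ?thesis
    using ln_le_cancel_iff[of 13 "exp (27/10)"] by simp
qed

lemma ln_le_sqrt_bound:
  fixes x :: real
  assumes "x \<ge> 13"
  shows "ln x \<le> 7/10 + 2 * sqrt (x/13)"
proof -
  define s where "s = sqrt (x/13)"
  have "s \<ge> 1" and "x = 13 * s\<^sup>2"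
    using assms by (simp_all add: s_def)
  then have "ln x = ln 13 + 2 * ln s"
    by (simp add: ln_mult ln_realpow)
  moreover have "ln s \<le> s - 1"
    using \<open>s \<ge> 1\<close> by (intro ln_le_minus_one) simp
  ultimately show ?thesis
    using ln_13_le unfolding s_def by linarith
qed

lemma quadratic_bound_in_sqrt_scale:
  fixes s L :: real
  assumes "s \<ge> 1" and "L \<ge> 0" and "L \<le> 7/10 + 2*s"
  shows "(L\<^sup>2 + 4*L + 7) * (13*s\<^sup>2) + 2*L + 4 \<le> 2 * (13*s\<^sup>2)\<^sup>2"
proof -
  have "L\<^sup>2 \<le> (7/10 + 2*s)\<^sup>2"
    using assms by (intro power_mono) auto
  then have "L\<^sup>2 + 4*L + 7 \<le> 4*s\<^sup>2 + 108/10*s + 1029/100"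
    using assms by (simp add: power2_eq_square algebra_simps)
  then have "(L\<^sup>2 + 4*L + 7) * (13*s\<^sup>2) \<le> (4*s\<^sup>2 + 108/10*s + 1029/100) * (13*s\<^sup>2)"
    by (intro mult_right_mono) auto
  also have "\<dots> = 52*s^4 + 1404/10*s^3 + 13377/100*s\<^sup>2"
    by (simp add: algebra_simps power2_eq_square power3_eq_cube power4_eq_xxxx)
  finally have "(L\<^sup>2 + 4*L + 7) * (13*s\<^sup>2) \<le> 52*s^4 + 1404/10*s^3 + 13377/100*s\<^sup>2" .
  moreover have "s \<le> s^4" "s\<^sup>2 \<le> s^4" "s^3 \<le> s^4" "1 \<le> s^4"
    using assms(1) power_increasing[of 1 4 s] power_increasing[of 2 4 s] power_increasing[of 3 4 s]
    by simp_all
  moreover have "2 * (13*s\<^sup>2)\<^sup>2 = 338 * s^4"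
    by (simp add: power2_eq_square power4_eq_xxxx)
  ultimately show ?thesis
    using assms(3) by linarith
qed

lemma sqrt_bound_of_quadratic_bound:
  fixes x L :: real
  assumes "x \<ge> 1" and "(L\<^sup>2 + 4*L + 7) * x + 2*L + 4 \<le> 2 * x\<^sup>2"
  shows "x - L - 4 \<le> (x - 1) * sqrt (1 - (2*L + 4) / x)"
proof -
  have "(x - L - 4)\<^sup>2 * x \<le> (x - 1)\<^sup>2 * (x - 2*L - 4)"
    using assms(2) by (simp add: algebra_simps power2_eq_square)
  moreover have "1 - (2*L + 4) / x = (x - 2*L - 4) / x"
    using assms(1) by (simp add: field_simps)
  ultimately have squared: "(x - L - 4)\<^sup>2 \<le> (x - 1)\<^sup>2 * (1 - (2*L + 4) / x)"
    using assms(1) by (simp add: pos_le_divide_eq)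
  have "x - L - 4 \<le> sqrt ((x - L - 4)\<^sup>2)"
    by simp
  also have "\<dots> \<le> sqrt ((x - 1)\<^sup>2 * (1 - (2*L + 4) / x))"
    using squared by (rule real_sqrt_le_mono)
  also have "\<dots> = (x - 1) * sqrt (1 - (2*L + 4) / x)"
    using assms(1) by (simp add: real_sqrt_mult)
  finally show ?thesis .
qed

theorem lemma3p3:
  fixes x :: real
  assumes "x \<ge> 13"
  shows "(x - 1) * sqrt (1 - (2 * ln x + 4) / x) - x + ln x + 4 \<ge> 0"
proof -
  define s where "s = sqrt (x/13)"
  have "s \<ge> 1" and x_eq: "x = 13 * s\<^sup>2"
    using assms by (simp_all add: s_def)
  have "ln x \<ge> 0" and "ln x \<le> 7/10 + 2*s"
    using assms ln_le_sqrt_bound unfolding s_def by simp_all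
  then have "((ln x)\<^sup>2 + 4 * ln x + 7) * x + 2 * ln x + 4 \<le> 2 * x\<^sup>2"
    using quadratic_bound_in_sqrt_scale[OF \<open>s \<ge> 1\<close>] x_eq by simp
  then have "x - ln x - 4 \<le> (x - 1) * sqrt (1 - (2 * ln x + 4) / x)"
    using assms by (intro sqrt_bound_of_quadratic_bound) simp_all
  then show ?thesis
    by simp
qed

end
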